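(* Let $\bm{S}\in\mathbb{R}^{m\times n}$ be $\alpha$-sparse and let $r$ be a positive integer. \begin{enumerate} \item (With replacement.) Let $\bm{R}\in\mathbb{R}^{|I|\times n}$ be the submatrix of $\bm{S}$ formed by $|I|$ rows sampled uniformly with replacement, where $|I|=cr\log(n)$ with $c\geq\frac{16}{3\alpha r}$. Then $\bm{R}$ is $2\alpha$-sparse with probability at least $1-n^{-1}$. Similarly, the submatrix $\bm{C}\in\mathbb{R}^{m\times|J|}$ formed by $|J|=cr\log(m)$ columns of $\bm{S}$ sampled uniformly with replacement is $2\alpha$-sparse with probability at least $1-m^{-1}$. \item (Without replacement.) Let $\bm{R}\in\mathbb{R}^{|I|\times n}$ be the submatrix of $\bm{S}$ formed by $|I|$ rows sampled uniformly without replacement, where $|I|=cr\log(n)$ with $c\geq\frac{8}{\alpha r}$. Then $\bm{R}$ is $2\alpha$-sparse with probability at least $1-2n^{-1}$. Similarly, the submatrix $\bm{C}\in\mathbb{R}^{m\times|J|}$ formed by $|J|=cr\log(m)$ columns of $\bm{S}$ sampled uniformly without replacement is $2\alpha$-sparse with probability at least $1-2m^{-1}$. \end{enumerate}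
   Context: A matrix $\bm{A}\in\mathbb{R}^{p\times q}$ is $\alpha$-sparse if every row of $\bm{A}$ has at most $\alpha q$ nonzero entries and every column has at most $\alpha p$ nonzero entries. $\log$ is the natural logarithm. *)

theory Defs
  imports "HOL-Probability.Probability"
begin

text \<open>A p x q real matrix is represented as a function A :: nat => nat => real,
  of which only the entries A i j with i < p, j < q matter.\<close>

definition sparse :: "nat \<Rightarrow> nat \<Rightarrow> real \<Rightarrow> (nat \<Rightarrow> nat \<Rightarrow> real) \<Rightarrow> bool" where
  "sparse p q \<alpha> A \<longleftrightarrow>
     (\<forall>i<p. real (card {j. j < q \<and> A i j \<noteq> 0}) \<le> \<alpha> * real q) \<and>
     (\<forall>j<q. real (card {i. i < p \<and> A i j \<noteq> 0}) \<le> \<alpha> * real p)"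

definition row_sub :: "(nat \<Rightarrow> nat \<Rightarrow> real) \<Rightarrow> (nat \<Rightarrow> nat) \<Rightarrow> nat \<Rightarrow> nat \<Rightarrow> real" where
  "row_sub S f = (\<lambda>i j. S (f i) j)"

definition col_sub :: "(nat \<Rightarrow> nat \<Rightarrow> real) \<Rightarrow> (nat \<Rightarrow> nat) \<Rightarrow> nat \<Rightarrow> nat \<Rightarrow> real" where
  "col_sub S g = (\<lambda>i j. S i (g j))"

definition sample_with :: "nat \<Rightarrow> nat \<Rightarrow> (nat \<Rightarrow> nat) pmf" where
  "sample_with k N = pmf_of_set ({..<k} \<rightarrow>\<^sub>E {..<N})"

definition sample_without :: "nat \<Rightarrow> nat \<Rightarrow> (nat \<Rightarrow> nat) pmf" where
  "sample_without k N = pmf_of_set {f \<in> {..<k} \<rightarrow>\<^sub>E {..<N}. inj_on f {..<k}}"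

end

theory Submission
  imports Defs
begin

(* Fix a column j of S with support A, so |A| <= alpha m, and let X count the sampled rows that
   land in A. Both samplers make the events "f i in A" negatively correlated,
   Pr[f ` T <= A] <= (|A|/m)^|T|. Since 2^X is the number of sets T of sampled rows with
   f ` T <= A, this gives E[2^X] <= (1 + |A|/m)^k <= e^(alpha k), and Markov's inequality yields
   Pr[X > 2 alpha k] <= e^(-(2 ln 2 - 1) alpha k) <= n^-2 as soon as alpha k >= (16/3) ln n.
   A union bound over the n columns gives column sparsity; row sparsity is inherited from S.
   Column sampling is row sampling of the transpose, and without replacement the hypothesis
   c >= 8/(alpha r) is stronger than needed, so even the bound 1 - 1/n holds. *)

text \<open>For \<open>f\<close> uniform on \<open>\<Omega>\<close>: \<open>Pr[f ` T \<subseteq> A] \<le> (card A / card B) ^ card T\<close>, cleared of denominators.\<close>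
definition neg_correlated :: "('a \<Rightarrow> 'b) set \<Rightarrow> 'a set \<Rightarrow> 'b set \<Rightarrow> bool" where
  "neg_correlated \<Omega> K B \<longleftrightarrow> (\<forall>T\<subseteq>K. \<forall>A\<subseteq>B.
     real (card {f \<in> \<Omega>. f ` T \<subseteq> A}) * real (card B) ^ card T
       \<le> real (card A) ^ card T * real (card \<Omega>))"

lemma card_PiE_image_subset:
  assumes "finite K" "T \<subseteq> K" "A \<subseteq> B"
  shows "card {f \<in> K \<rightarrow>\<^sub>E B. f ` T \<subseteq> A} = card A ^ card T * card B ^ card (K - T)"
proof -
  have "{f \<in> K \<rightarrow>\<^sub>E B. f ` T \<subseteq> A} = (\<Pi>\<^sub>E i\<in>K. if i \<in> T then A else B)"
    using assms by (auto simp: PiE_def Pi_def split: if_splits)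
  then have "card {f \<in> K \<rightarrow>\<^sub>E B. f ` T \<subseteq> A} = (\<Prod>i\<in>K. if i \<in> T then card A else card B)"
    using assms by (simp add: card_PiE if_distrib)
  also have "\<dots> = card A ^ card T * card B ^ card (K - T)"
    using assms by (simp add: prod.If_cases Int_absorb1 Diff_eq[symmetric] Int_commute)
  finally show ?thesis .
qed

lemma neg_correlated_PiE:
  assumes "finite K"
  shows "neg_correlated (K \<rightarrow>\<^sub>E B) K B"
  unfolding neg_correlated_def
proof (intro allI impI)
  fix T A assume "T \<subseteq> K" "A \<subseteq> B"
  moreover have "card K = card T + card (K - T)"
    using assms \<open>T \<subseteq> K\<close> by (metis card_Diff_subset card_mono finite_subset le_add_diff_inverse)
  ultimately show "real (card {f \<in> K \<rightarrow>\<^sub>E B. f ` T \<subseteq> A}) * real (card B) ^ card T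
      \<le> real (card A) ^ card T * real (card (K \<rightarrow>\<^sub>E B))"
    using assms by (simp add: card_PiE_image_subset card_funcsetE power_add)
qed

lemma card_inj_PiE_insert:
  assumes "x \<notin> K" "finite K" "finite B"
  shows "card {f \<in> insert x K \<rightarrow>\<^sub>E B. inj_on f (insert x K) \<and> P f}
       = (\<Sum>y\<in>B. card {g \<in> K \<rightarrow>\<^sub>E B - {y}. inj_on g K \<and> P (g(x := y))})"
proof -
  let ?h = "\<lambda>(y, g). g(x := y)"
  let ?D = "{(y, g). y \<in> B \<and> g \<in> K \<rightarrow>\<^sub>E (B - {y}) \<and> inj_on g K}"
  have "{f \<in> insert x K \<rightarrow>\<^sub>E B. inj_on f (insert x K) \<and> P f}
      = {f \<in> {f \<in> insert x K \<rightarrow>\<^sub>E B. inj_on f (insert x K)}. P f}"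
    by auto
  also have "\<dots> = ?h ` {p \<in> ?D. P (?h p)}"
    unfolding extensional_funcset_extend_domain_inj_on_eq[OF assms(1)] by blast
  finally have "{f \<in> insert x K \<rightarrow>\<^sub>E B. inj_on f (insert x K) \<and> P f} = ?h ` {p \<in> ?D. P (?h p)}" .
  moreover have "inj_on ?h {p \<in> ?D. P (?h p)}"
    by (rule inj_on_subset[OF extensional_funcset_extend_domain_inj_onI[OF assms(1)]]) auto
  moreover have "{p \<in> ?D. P (?h p)} = Sigma B (\<lambda>y. {g \<in> K \<rightarrow>\<^sub>E B - {y}. inj_on g K \<and> P (g(x := y))})"
    by auto
  moreover have "finite {g \<in> K \<rightarrow>\<^sub>E B - {y}. inj_on g K \<and> P (g(x := y))}" for y
    using assms by (simp add: finite_PiE)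
  ultimately show ?thesis
    using assms by (simp add: card_image)
qed

lemma mult_pow_le_of_pred_pow_le:
  fixes a N c J :: real
  assumes "1 \<le> a" "a \<le> N" "0 \<le> c" "c \<le> J" and pred: "c * (N - 1) ^ t \<le> (a - 1) ^ t * J"
  shows "c * N ^ t \<le> a ^ t * J"
proof (cases "a = N")
  case True
  then show ?thesis using assms by (simp add: mult.commute mult_right_mono)
next
  case False
  then have N1: "0 < N - 1" using assms by linarith
  have "((a - 1) * N) ^ t \<le> (a * (N - 1)) ^ t"
    using assms by (intro power_mono) (auto simp: algebra_simps)
  have "(N - 1) ^ t * (c * N ^ t) = (c * (N - 1) ^ t) * N ^ t" by (simp add: mult_ac)
  also have "\<dots> \<le> ((a - 1) ^ t * J) * N ^ t"
    using pred assms by (intro mult_right_mono) auto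
  also have "\<dots> = ((a - 1) * N) ^ t * J" by (simp add: power_mult_distrib mult_ac)
  also have "\<dots> \<le> (a * (N - 1)) ^ t * J"
    using \<open>((a - 1) * N) ^ t \<le> (a * (N - 1)) ^ t\<close> assms by (intro mult_right_mono) auto
  also have "\<dots> = (N - 1) ^ t * (a ^ t * J)" by (simp add: power_mult_distrib mult_ac)
  finally have "(N - 1) ^ t * (c * N ^ t) \<le> (N - 1) ^ t * (a ^ t * J)" .
  then show ?thesis using N1 by simp
qed

lemma card_inj_PiE_insert_image_subset:
  assumes "x \<notin> K" "T \<subseteq> K" "finite K" "A \<subseteq> B" "finite B"
  shows "card {f \<in> insert x K \<rightarrow>\<^sub>E B. inj_on f (insert x K) \<and> f ` insert x T \<subseteq> A}
       = (\<Sum>y\<in>A. card {g \<in> K \<rightarrow>\<^sub>E B - {y}. inj_on g K \<and> g ` T \<subseteq> A - {y}})"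
proof -
  have "x \<notin> T" using assms by blast
  then have image_iff: "(g(x := y)) ` insert x T \<subseteq> A \<longleftrightarrow> y \<in> A \<and> g ` T \<subseteq> A - {y}"
    if "g \<in> K \<rightarrow>\<^sub>E B - {y}" for g y
    using that assms by (auto dest: PiE_mem)
  have "card {f \<in> insert x K \<rightarrow>\<^sub>E B. inj_on f (insert x K) \<and> f ` insert x T \<subseteq> A}
      = (\<Sum>y\<in>B. card {g \<in> K \<rightarrow>\<^sub>E B - {y}. inj_on g K \<and> (g(x := y)) ` insert x T \<subseteq> A})"
    using assms by (intro card_inj_PiE_insert)
  also have "\<dots> = (\<Sum>y\<in>B. if y \<in> A then card {g \<in> K \<rightarrow>\<^sub>E B - {y}. inj_on g K \<and> g ` T \<subseteq> A - {y}} else 0)"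
  proof (rule sum.cong[OF refl])
    fix y
    have "{g \<in> K \<rightarrow>\<^sub>E B - {y}. inj_on g K \<and> (g(x := y)) ` insert x T \<subseteq> A}
        = (if y \<in> A then {g \<in> K \<rightarrow>\<^sub>E B - {y}. inj_on g K \<and> g ` T \<subseteq> A - {y}} else {})"
      using image_iff by auto
    then show "card {g \<in> K \<rightarrow>\<^sub>E B - {y}. inj_on g K \<and> (g(x := y)) ` insert x T \<subseteq> A}
        = (if y \<in> A then card {g \<in> K \<rightarrow>\<^sub>E B - {y}. inj_on g K \<and> g ` T \<subseteq> A - {y}} else 0)"
      by simp
  qed
  also have "\<dots> = (\<Sum>y\<in>A. card {g \<in> K \<rightarrow>\<^sub>E B - {y}. inj_on g K \<and> g ` T \<subseteq> A - {y}})"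
    using assms sum.inter_restrict[of B "\<lambda>y. card {g \<in> K \<rightarrow>\<^sub>E B - {y}. inj_on g K \<and> g ` T \<subseteq> A - {y}}" A]
    by (simp add: Int_absorb1)
  finally show ?thesis .
qed

lemma card_inj_PiE_image_subset_le:
  assumes "finite T" "T \<subseteq> K" "finite K" "finite B" "A \<subseteq> B"
  shows "real (card {f \<in> K \<rightarrow>\<^sub>E B. inj_on f K \<and> f ` T \<subseteq> A}) * real (card B) ^ card T
         \<le> real (card A) ^ card T * real (card {f \<in> K \<rightarrow>\<^sub>E B. inj_on f K})"
  using assms
proof (induction T arbitrary: K B A rule: finite_induct)
  case empty
  then show ?case by simp
next
  case (insert x T)
  \<comment> \<open>Fixing \<open>f x = y\<close> leaves a uniform injection \<open>K - {x} \<rightarrow> B - {y}\<close>, and \<open>(a - 1) / (N - 1) \<le> a / N\<close>.\<close>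
  define K' where "K' = K - {x}"
  have K: "K = insert x K'" "x \<notin> K'" "finite K'" "T \<subseteq> K'"
    using insert by (auto simp: K'_def)
  have fin_A: "finite A" using insert.prems finite_subset by blast
  define c where "c y = card {g \<in> K' \<rightarrow>\<^sub>E B - {y}. inj_on g K' \<and> g ` T \<subseteq> A - {y}}" for y
  define J where "J = prod ((-) (card B - 1)) {0..<card K'}"
  have card_inj_K': "card {g \<in> K' \<rightarrow>\<^sub>E B - {y}. inj_on g K'} = J" if "y \<in> B" for y
    using card_inj_on_subset_funcset[of K' "B - {y}" K'] K insert.prems that by (simp add: J_def)
  have lhs: "card {f \<in> K \<rightarrow>\<^sub>E B. inj_on f K \<and> f ` insert x T \<subseteq> A} = (\<Sum>y\<in>A. c y)"
    unfolding K(1) c_def using K insert.prems by (intro card_inj_PiE_insert_image_subset)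
  have rhs: "card {f \<in> K \<rightarrow>\<^sub>E B. inj_on f K} = card B * J"
    using card_inj_PiE_insert[of x K' B "\<lambda>_. True"] K insert.prems card_inj_K' by simp
  have step: "real (c y) * real (card B) ^ card T \<le> real (card A) ^ card T * real J" if "y \<in> A" for y
  proof (rule mult_pow_le_of_pred_pow_le)
    have "y \<in> B" using that insert.prems by auto
    have IH: "real (c y) * real (card (B - {y})) ^ card T \<le> real (card (A - {y})) ^ card T * real J"
      unfolding c_def card_inj_K'[OF \<open>y \<in> B\<close>, symmetric]
      by (rule insert.IH) (use K insert.prems in auto)
    have "card A = Suc (card (A - {y}))" "card B = Suc (card (B - {y}))"
      using card_Suc_Diff1[OF fin_A that] card_Suc_Diff1[of B y] \<open>y \<in> B\<close> insert.prems by simp_all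
    then have "real (card (A - {y})) = real (card A) - 1" "real (card (B - {y})) = real (card B) - 1"
      by simp_all
    with IH show "real (c y) * (real (card B) - 1) ^ card T \<le> (real (card A) - 1) ^ card T * real J"
      by (simp only:)
    show "real (c y) \<le> real J"
      unfolding c_def card_inj_K'[OF \<open>y \<in> B\<close>, symmetric] using K insert.prems
      by (intro of_nat_mono card_mono) (auto simp: finite_PiE)
    show "1 \<le> real (card A)" using that fin_A by (auto simp: Suc_le_eq card_gt_0_iff)
    show "real (card A) \<le> real (card B)" using insert.prems by (simp add: card_mono)
  qed simp
  have "real (card {f \<in> K \<rightarrow>\<^sub>E B. inj_on f K \<and> f ` insert x T \<subseteq> A}) * real (card B) ^ card (insert x T)
      = real (card B) * (\<Sum>y\<in>A. real (c y) * real (card B) ^ card T)"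
    unfolding lhs using insert.hyps by (simp add: sum_distrib_right mult_ac)
  also have "\<dots> \<le> real (card B) * (\<Sum>y\<in>A. real (card A) ^ card T * real J)"
    using step by (intro mult_left_mono sum_mono) auto
  also have "\<dots> = real (card A) ^ card (insert x T) * real (card {f \<in> K \<rightarrow>\<^sub>E B. inj_on f K})"
    unfolding rhs using insert.hyps by (simp add: mult_ac)
  finally show ?case .
qed

lemma neg_correlated_inj_PiE:
  assumes "finite K" "finite B"
  shows "neg_correlated {f \<in> K \<rightarrow>\<^sub>E B. inj_on f K} K B"
  unfolding neg_correlated_def
proof (intro allI impI)
  fix T A assume "T \<subseteq> K" "A \<subseteq> B"
  moreover have "{f \<in> {f \<in> K \<rightarrow>\<^sub>E B. inj_on f K}. f ` T \<subseteq> A} = {f \<in> K \<rightarrow>\<^sub>E B. inj_on f K \<and> f ` T \<subseteq> A}"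
    by auto
  ultimately show "real (card {f \<in> {f \<in> K \<rightarrow>\<^sub>E B. inj_on f K}. f ` T \<subseteq> A}) * real (card B) ^ card T
      \<le> real (card A) ^ card T * real (card {f \<in> K \<rightarrow>\<^sub>E B. inj_on f K})"
    using assms by (simp add: card_inj_PiE_image_subset_le finite_subset)
qed

lemma two_pow_card_hits:
  assumes "finite K"
  shows "2 ^ card {i \<in> K. f i \<in> A} = card {X \<in> Pow K. f ` X \<subseteq> A}"
proof -
  have "{X \<in> Pow K. f ` X \<subseteq> A} = Pow {i \<in> K. f i \<in> A}" by auto
  then show ?thesis using assms by (simp add: card_Pow)
qed

lemma sum_two_pow_card_hits_le:
  assumes nc: "neg_correlated \<Omega> K B" and "finite \<Omega>" "finite K" "A \<subseteq> B" "0 < card B"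
  shows "(\<Sum>f\<in>\<Omega>. (2::real) ^ card {i \<in> K. f i \<in> A})
         \<le> (1 + real (card A) / real (card B)) ^ card K * real (card \<Omega>)"
proof -
  let ?p = "real (card A) / real (card B)"
  have "(\<Sum>f\<in>\<Omega>. (2::real) ^ card {i \<in> K. f i \<in> A}) = (\<Sum>f\<in>\<Omega>. \<Sum>X\<in>Pow K. if f ` X \<subseteq> A then 1 else 0)"
  proof (rule sum.cong[OF refl])
    fix f
    have "(2::real) ^ card {i \<in> K. f i \<in> A} = real (card {X \<in> Pow K. f ` X \<subseteq> A})"
      unfolding two_pow_card_hits[OF \<open>finite K\<close>, symmetric] by simp
    then show "(2::real) ^ card {i \<in> K. f i \<in> A} = (\<Sum>X\<in>Pow K. if f ` X \<subseteq> A then 1 else 0)"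
      using \<open>finite K\<close> by (simp add: sum.If_cases Int_def)
  qed
  also have "\<dots> = (\<Sum>X\<in>Pow K. real (card {f \<in> \<Omega>. f ` X \<subseteq> A}))"
    using \<open>finite \<Omega>\<close> by (subst sum.swap) (simp add: sum.If_cases Int_def)
  also have "\<dots> \<le> (\<Sum>X\<in>Pow K. ?p ^ card X * real (card \<Omega>))"
  proof (rule sum_mono)
    fix X assume "X \<in> Pow K"
    then have "real (card {f \<in> \<Omega>. f ` X \<subseteq> A}) * real (card B) ^ card X \<le> real (card A) ^ card X * real (card \<Omega>)"
      using nc \<open>A \<subseteq> B\<close> unfolding neg_correlated_def by blast
    then show "real (card {f \<in> \<Omega>. f ` X \<subseteq> A}) \<le> ?p ^ card X * real (card \<Omega>)"
      using \<open>0 < card B\<close> by (simp add: field_simps)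
  qed
  also have "\<dots> = (\<Prod>i\<in>K. ?p + 1) * real (card \<Omega>)"
    using prod_add[OF \<open>finite K\<close>, of "\<lambda>_. ?p" "\<lambda>_. 1"] by (simp add: sum_distrib_right)
  finally show ?thesis by (simp add: add.commute)
qed

lemma one_plus_pow_le_exp:
  assumes "0 \<le> x" "x \<le> \<alpha>"
  shows "(1 + x) ^ n \<le> exp (\<alpha> * real n)"
proof -
  have "(1 + x) ^ n \<le> exp \<alpha> ^ n"
    using assms order_trans[OF exp_ge_add_one_self exp_mono[OF assms(2)]] by (intro power_mono) auto
  then show ?thesis by (simp add: exp_of_nat_mult[symmetric] mult.commute)
qed

lemma card_many_hits_le:
  assumes "neg_correlated \<Omega> K B" "finite \<Omega>" "finite K" "A \<subseteq> B" "0 < card B"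
    and dense: "real (card A) \<le> \<alpha> * real (card B)"
  shows "real (card {f \<in> \<Omega>. 2 * \<alpha> * real (card K) < real (card {i \<in> K. f i \<in> A})})
         \<le> exp (- (2 * ln 2 - 1) * \<alpha> * real (card K)) * real (card \<Omega>)"
proof -
  define k where "k = real (card K)"
  define X where "X f = card {i \<in> K. f i \<in> A}" for f :: "'a \<Rightarrow> 'b"
  define bad where "bad = {f \<in> \<Omega>. 2 * \<alpha> * k < real (X f)}"
  \<comment> \<open>Markov's inequality for \<open>2 ^ X\<close>; \<open>2 = exp t\<close> with the optimal \<open>t = ln 2\<close>.\<close>
  have "real (card bad) * exp (2 * ln 2 * \<alpha> * k) = (\<Sum>f\<in>bad. 2 powr (2 * \<alpha> * k))"
    by (simp add: powr_def mult_ac)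
  also have "\<dots> \<le> (\<Sum>f\<in>bad. (2::real) ^ X f)"
    by (intro sum_mono) (auto simp: bad_def powr_realpow[symmetric])
  also have "\<dots> \<le> (\<Sum>f\<in>\<Omega>. (2::real) ^ X f)"
    using \<open>finite \<Omega>\<close> by (intro sum_mono2) (auto simp: bad_def)
  also have "\<dots> \<le> (1 + real (card A) / real (card B)) ^ card K * real (card \<Omega>)"
    unfolding X_def using assms by (intro sum_two_pow_card_hits_le)
  also have "\<dots> \<le> exp (\<alpha> * k) * real (card \<Omega>)"
    unfolding k_def using dense \<open>0 < card B\<close>
    by (intro mult_right_mono one_plus_pow_le_exp) (auto simp: divide_le_eq)
  finally have "real (card bad) \<le> exp (\<alpha> * k) * real (card \<Omega>) / exp (2 * ln 2 * \<alpha> * k)"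
    by (simp add: pos_le_divide_eq)
  also have "\<dots> = exp (- (2 * ln 2 - 1) * \<alpha> * k) * real (card \<Omega>)"
    by (simp add: exp_diff algebra_simps)
  finally show ?thesis unfolding bad_def X_def k_def .
qed

lemma prob_all_few_hits_ge:
  fixes A :: "'j \<Rightarrow> 'b set"
  assumes "neg_correlated \<Omega> K B" and fin: "finite \<Omega>" "\<Omega> \<noteq> {}" "finite K" "0 < card B" "finite J"
    and "\<And>j. j \<in> J \<Longrightarrow> A j \<subseteq> B \<and> real (card (A j)) \<le> \<alpha> * real (card B)"
  shows "1 - real (card J) * exp (- (2 * ln 2 - 1) * \<alpha> * real (card K))
         \<le> measure_pmf.prob (pmf_of_set \<Omega>)
              {f. \<forall>j\<in>J. real (card {i \<in> K. f i \<in> A j}) \<le> 2 * \<alpha> * real (card K)}"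
    (is "1 - _ * ?\<delta> \<le> measure_pmf.prob _ ?G")
proof -
  define bad where "bad j = {f \<in> \<Omega>. 2 * \<alpha> * real (card K) < real (card {i \<in> K. f i \<in> A j})}" for j
  have "\<Omega> - ?G \<subseteq> (\<Union>j\<in>J. bad j)" by (auto simp: bad_def not_le)
  then have "real (card (\<Omega> - ?G)) \<le> real (card (\<Union>j\<in>J. bad j))"
    using fin by (intro of_nat_mono card_mono) (auto simp: bad_def)
  also have "\<dots> \<le> (\<Sum>j\<in>J. real (card (bad j)))"
    using card_UN_le[OF \<open>finite J\<close>, of bad] by (simp flip: of_nat_sum)
  also have "\<dots> \<le> (\<Sum>j\<in>J. ?\<delta> * real (card \<Omega>))"
    unfolding bad_def using assms by (intro sum_mono card_many_hits_le) auto
  finally have "real (card (\<Omega> - ?G)) \<le> real (card J) * ?\<delta> * real (card \<Omega>)" by simp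
  moreover have "real (card (\<Omega> \<inter> ?G)) = real (card \<Omega>) - real (card (\<Omega> - ?G))"
    using card_Int_Diff[OF \<open>finite \<Omega>\<close>, of ?G] by simp
  moreover have "0 < card \<Omega>" using fin by (simp add: card_gt_0_iff)
  ultimately show ?thesis
    using fin by (simp add: measure_pmf_of_set field_simps)
qed

lemma ln2_ge_11_16: "11/16 \<le> ln (2::real)"
proof -
  from ln_approx_bounds[of 2 3] have "ln (2::real) \<in> {307/443..}"
    by (simp add: eval_nat_numeral)
  then show ?thesis by simp
qed

lemma exp_tail_le_inverse_square:
  assumes "0 < M" "16/3 * ln (real M) \<le> \<alpha> * k"
  shows "exp (- (2 * ln 2 - 1) * \<alpha> * k) \<le> 1 / real M ^ 2"
proof -
  have "0 \<le> ln (real M)" using assms by simp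
  then have "0 \<le> \<alpha> * k" using assms(2) by linarith
  \<comment> \<open>\<open>2 ln 2 - 1 \<ge> 3/8\<close> is where the constant \<open>16/3\<close> comes from.\<close>
  then have "3/8 * (\<alpha> * k) \<le> (2 * ln 2 - 1) * (\<alpha> * k)"
    using ln2_ge_11_16 by (intro mult_right_mono) auto
  moreover have "2 * ln (real M) = ln (real M ^ 2)"
    using assms by (simp add: ln_realpow)
  ultimately have "- (2 * ln 2 - 1) * \<alpha> * k \<le> - ln (real M ^ 2)"
    using assms(2) by linarith
  then have "exp (- (2 * ln 2 - 1) * \<alpha> * k) \<le> exp (- ln (real M ^ 2))"
    by (rule exp_mono)
  also have "\<dots> = 1 / real M ^ 2"
    using assms by (simp add: exp_minus inverse_eq_divide)
  finally show ?thesis .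
qed

lemma sample_size_bound:
  assumes "0 < \<alpha>" "0 < r" "L / (\<alpha> * real r) \<le> c" "real k = c * real r * ln (real M)" "0 < M"
  shows "L * ln (real M) \<le> \<alpha> * real k"
proof -
  have "L \<le> c * (\<alpha> * real r)" using assms by (simp add: pos_divide_le_eq)
  then have "L * ln (real M) \<le> c * (\<alpha> * real r) * ln (real M)"
    using assms by (intro mult_right_mono) auto
  then show ?thesis using assms by (simp add: mult_ac)
qed

lemma sparse_transpose: "sparse q p \<alpha> (\<lambda>i j. A j i) \<longleftrightarrow> sparse p q \<alpha> A"
  unfolding sparse_def by auto

lemma sparse_col_sub_iff: "sparse m k \<alpha> (col_sub S g) \<longleftrightarrow> sparse k m \<alpha> (row_sub (\<lambda>i j. S j i) g)"
  by (subst sparse_transpose[symmetric]) (simp add: col_sub_def row_sub_def)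

lemma prob_sparse_row_sub_ge:
  assumes sp: "sparse m n \<alpha> S" and "0 < \<alpha>" "0 < m" "0 < n"
    and \<Omega>: "finite \<Omega>" "\<Omega> \<noteq> {}" "\<Omega> \<subseteq> {..<k} \<rightarrow>\<^sub>E {..<m}" "neg_correlated \<Omega> {..<k} {..<m}"
    and size: "16/3 * ln (real n) \<le> \<alpha> * real k"
  shows "1 - 1 / real n \<le> measure_pmf.prob (pmf_of_set \<Omega>) {f. sparse k n (2 * \<alpha>) (row_sub S f)}"
proof -
  define A where "A j = {i. i < m \<and> S i j \<noteq> 0}" for j
  define G where "G = {f. \<forall>j\<in>{..<n}. real (card {i \<in> {..<k}. f i \<in> A j}) \<le> 2 * \<alpha> * real (card {..<k})}"
  have "1 - real n * exp (- (2 * ln 2 - 1) * \<alpha> * real k) \<le> measure_pmf.prob (pmf_of_set \<Omega>) G"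
    unfolding G_def using prob_all_few_hits_ge[OF \<Omega>(4,1,2), of "{..<n}" A \<alpha>] sp \<open>0 < m\<close>
    by (auto simp: sparse_def A_def)
  moreover have "real n * exp (- (2 * ln 2 - 1) * \<alpha> * real k) \<le> 1 / real n"
    using mult_left_mono[OF exp_tail_le_inverse_square[OF \<open>0 < n\<close> size], of "real n"] \<open>0 < n\<close>
    by (simp add: power2_eq_square)
  moreover have "\<Omega> \<inter> G \<subseteq> {f. sparse k n (2 * \<alpha>) (row_sub S f)}"
  proof
    fix f assume f: "f \<in> \<Omega> \<inter> G"
    then have fm: "f i < m" if "i < k" for i using \<Omega>(3) that by (auto dest: PiE_mem)
    have "real (card {j. j < n \<and> row_sub S f i j \<noteq> 0}) \<le> 2 * \<alpha> * real n" if "i < k" for i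
    proof -
      have "real (card {j. j < n \<and> S (f i) j \<noteq> 0}) \<le> \<alpha> * real n"
        using sp fm[OF that] unfolding sparse_def by blast
      then show ?thesis using \<open>0 < \<alpha>\<close> by (simp add: row_sub_def)
    qed
    moreover have "{i. i < k \<and> row_sub S f i j \<noteq> 0} = {i \<in> {..<k}. f i \<in> A j}" for j
      using fm by (auto simp: row_sub_def A_def)
    ultimately show "f \<in> {f. sparse k n (2 * \<alpha>) (row_sub S f)}"
      using f unfolding sparse_def G_def by auto
  qed
  then have "measure_pmf.prob (pmf_of_set \<Omega>) (G \<inter> \<Omega>)
      \<le> measure_pmf.prob (pmf_of_set \<Omega>) {f. sparse k n (2 * \<alpha>) (row_sub S f)}"
    by (intro measure_pmf.finite_measure_mono) auto
  moreover have "measure_pmf.prob (pmf_of_set \<Omega>) (G \<inter> \<Omega>) = measure_pmf.prob (pmf_of_set \<Omega>) G"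
    using measure_Int_set_pmf[of "pmf_of_set \<Omega>" G] \<Omega> by simp
  ultimately show ?thesis by linarith
qed

lemma prob_sparse_row_sub_sample_with:
  assumes "sparse m n \<alpha> S" "0 < \<alpha>" "0 < m" "0 < n"
    and "0 < r" "16 / (3 * \<alpha> * real r) \<le> c" "real k = c * real r * ln (real n)"
  shows "1 - 1 / real n \<le> measure_pmf.prob (sample_with k m) {f. sparse k n (2 * \<alpha>) (row_sub S f)}"
proof -
  have "16/3 * ln (real n) \<le> \<alpha> * real k"
    using sample_size_bound[of \<alpha> r "16/3"] assms by simp
  then show ?thesis
    unfolding sample_with_def using assms
    by (intro prob_sparse_row_sub_ge) (auto simp: neg_correlated_PiE PiE_eq_empty_iff finite_PiE)
qed

lemma prob_sparse_row_sub_sample_without: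
  assumes "sparse m n \<alpha> S" "0 < \<alpha>" "0 < m" "0 < n"
    and "0 < r" "8 / (\<alpha> * real r) \<le> c" "real k = c * real r * ln (real n)" "k \<le> m"
  shows "1 - 2 / real n \<le> measure_pmf.prob (sample_without k m) {f. sparse k n (2 * \<alpha>) (row_sub S f)}"
proof -
  let ?\<Omega> = "{f \<in> {..<k} \<rightarrow>\<^sub>E {..<m}. inj_on f {..<k}}"
  have "(\<lambda>i\<in>{..<k}. i) \<in> ?\<Omega>" using \<open>k \<le> m\<close> by auto
  then have "?\<Omega> \<noteq> {}" by blast
  moreover have "finite ?\<Omega>" "?\<Omega> \<subseteq> {..<k} \<rightarrow>\<^sub>E {..<m}" by (auto simp: finite_PiE)
  moreover have "neg_correlated ?\<Omega> {..<k} {..<m}" by (rule neg_correlated_inj_PiE) auto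
  moreover have "16/3 * ln (real n) \<le> \<alpha> * real k"
  proof -
    have "16/3 * ln (real n) \<le> 8 * ln (real n)" using \<open>0 < n\<close> by simp
    also have "\<dots> \<le> \<alpha> * real k" using sample_size_bound[of \<alpha> r 8 c k n] assms by simp
    finally show ?thesis .
  qed
  ultimately have "1 - 1 / real n \<le> measure_pmf.prob (pmf_of_set ?\<Omega>) {f. sparse k n (2 * \<alpha>) (row_sub S f)}"
    using assms by (intro prob_sparse_row_sub_ge) simp_all
  moreover have "1 - 2 / real n \<le> 1 - 1 / real n"
    using divide_right_mono[of 1 2 "real n"] by simp
  ultimately show ?thesis unfolding sample_without_def by linarith
qed

theorem proposition4p5:
  fixes m n :: nat and S :: "nat \<Rightarrow> nat \<Rightarrow> real" and \<alpha> :: real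
  assumes "0 < m" and "0 < n" and "0 < \<alpha>"
    and "sparse m n \<alpha> S"
  shows
   "(\<forall>(r::nat) (c::real) (k::nat). 0 < r \<longrightarrow> c \<ge> 16 / (3 * \<alpha> * real r) \<longrightarrow>
        real k = c * real r * ln (real n) \<longrightarrow>
        measure_pmf.prob (sample_with k m) {f. sparse k n (2 * \<alpha>) (row_sub S f)}
          \<ge> 1 - 1 / real n)
  \<and> (\<forall>(r::nat) (c::real) (k::nat). 0 < r \<longrightarrow> c \<ge> 16 / (3 * \<alpha> * real r) \<longrightarrow>
        real k = c * real r * ln (real m) \<longrightarrow>
        measure_pmf.prob (sample_with k n) {g. sparse m k (2 * \<alpha>) (col_sub S g)}
          \<ge> 1 - 1 / real m)
  \<and> (\<forall>(r::nat) (c::real) (k::nat). 0 < r \<longrightarrow> c \<ge> 8 / (\<alpha> * real r) \<longrightarrow>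
        real k = c * real r * ln (real n) \<longrightarrow> k \<le> m \<longrightarrow>
        measure_pmf.prob (sample_without k m) {f. sparse k n (2 * \<alpha>) (row_sub S f)}
          \<ge> 1 - 2 / real n)
  \<and> (\<forall>(r::nat) (c::real) (k::nat). 0 < r \<longrightarrow> c \<ge> 8 / (\<alpha> * real r) \<longrightarrow>
        real k = c * real r * ln (real m) \<longrightarrow> k \<le> n \<longrightarrow>
        measure_pmf.prob (sample_without k n) {g. sparse m k (2 * \<alpha>) (col_sub S g)}
          \<ge> 1 - 2 / real m)"
proof -
  have S_T: "sparse n m \<alpha> (\<lambda>i j. S j i)" using assms(4) sparse_transpose by blast
  show ?thesis
    unfolding sparse_col_sub_iff
    using prob_sparse_row_sub_sample_with[OF assms(4,3,1,2)] prob_sparse_row_sub_sample_with[OF S_T assms(3,2,1)]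
      prob_sparse_row_sub_sample_without[OF assms(4,3,1,2)] prob_sparse_row_sub_sample_without[OF S_T assms(3,2,1)]
    by blast
qed

end
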